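(* Let $\triangle PQR$ be a triangle contained in $D$. Then there exists a triangle $\triangle P'Q'R'\subset D$ that is (Euclidean-)similar to $\triangle PQR$ such that for every triangle $\triangle ABC\subset D$ that is (Euclidean-)congruent to $\triangle P'Q'R'$, $\rho(\psi_{\triangle ABC})=\frac13$.
   Context: $D$ is the open unit disk in $\mathbb{R}^2$ and $S^1$ its boundary, identified with $\mathbb{R}/\mathbb{Z}$ via $t\mapsto(\cos2\pi t,\sin2\pi t)$. Triangles are non-degenerate closed Euclidean triangles. For a triangle $T\subset D$ and $v\in S^1$, there are exactly two chords $vv_1,vv_2$ of $S^1$ whose lines support $T$; with $v_1$ the one reached first moving counterclockwise from $v$, set $\psi_T(v):=v_1$ (a homeomorphism of $S^1$). $\rho(\psi_T)=\lim_{n\to\infty}\overline{\psi_T}^{\,n}(0)/n$ is its rotation number, where $\overline{\psi_T}$ is the lift to $\mathbb{R}$ with $\overline{\psi_T}(0)\in(0,1)$. *)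

theory Defs
  imports "HOL-Analysis.Analysis"
begin

text \<open>Points of the plane are vectors in real^2.  The circle S^1 is parametrised by
  R/Z via t maps to (cos 2 pi t, sin 2 pi t).\<close>

definition circ :: "real \<Rightarrow> real^2" where
  "circ t = vector [cos (2 * pi * t), sin (2 * pi * t)]"

definition is_triangle :: "(real^2) set \<Rightarrow> bool" where
  "is_triangle T \<longleftrightarrow> (\<exists>A B C. \<not> collinear {A, B, C} \<and> T = convex hull {A, B, C})"

definition in_disk :: "(real^2) set \<Rightarrow> bool" where
  "in_disk T \<longleftrightarrow> T \<subseteq> ball 0 1"

definition cross2 :: "real^2 \<Rightarrow> real^2 \<Rightarrow> real" where
  "cross2 u v = u$1 * v$2 - u$2 * v$1"

definition supports :: "(real^2) set \<Rightarrow> real^2 \<Rightarrow> real^2 \<Rightarrow> bool" where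
  "supports T p q \<longleftrightarrow> p \<noteq> q \<and> (\<exists>x\<in>T. cross2 (q - p) (x - p) = 0) \<and>
     ((\<forall>x\<in>T. cross2 (q - p) (x - p) \<ge> 0) \<or> (\<forall>x\<in>T. cross2 (q - p) (x - p) \<le> 0))"

text \<open>Counterclockwise offset (in (0,1)) from v = circ t to psi_T(v): the first endpoint,
  moving counterclockwise from v, of a chord from v whose line supports T.\<close>
definition psi_offset :: "(real^2) set \<Rightarrow> real \<Rightarrow> real" where
  "psi_offset T t = Inf {d. 0 < d \<and> d < 1 \<and> supports T (circ t) (circ (t + d))}"

definition psi_lift :: "(real^2) set \<Rightarrow> real \<Rightarrow> real" where
  "psi_lift T x = x + psi_offset T x"

definition similar :: "(real^2) set \<Rightarrow> (real^2) set \<Rightarrow> bool" where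
  "similar S T \<longleftrightarrow> (\<exists>f k. k > 0 \<and> (\<forall>x y. dist (f x) (f y) = k * dist x y) \<and> f ` S = T)"

definition congruent :: "(real^2) set \<Rightarrow> (real^2) set \<Rightarrow> bool" where
  "congruent S T \<longleftrightarrow> (\<exists>f. (\<forall>x y. dist (f x) (f y) = dist x y) \<and> f ` S = T)"

end

theory Submission
  imports Defs
begin

text \<open>
  For a triangle T in the disk, psi_T lifts to the pointwise minimum, over the vertices X of T,
  of the maps sending x to x + chord_offset X x, where circ (x + chord_offset X x) is the far
  end of the chord from circ x through X. These maps are monotone and of degree one, so the
  rotation number is 1/3 as soon as the third iterate of the lift moves some point by at least
  one turn and some point by at most one turn.

  The first bound holds for every triangle: the rays from the centroid through the vertices meet
  the circle in an inscribed triangle containing T, and psi_T maps each of its vertices at or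
  beyond the next one. For the second, normalise T by a similarity so that its longest side is a
  diameter (T not acute) or its circumcircle is the unit circle (T acute). Then there is an
  inscribed triangle each of whose sides is strictly crossed by a vertex of T, so psi_T maps each
  of its vertices at most to the next one. Shrinking T by a factor l < 1 close to 1 makes this
  robust under all congruences into the disk: the origin is a convex combination of the vertices
  of T on the circle, so a congruent copy of l T inside the disk is translated by less than
  sqrt (1 - l^2).
\<close>

section \<open>Lifts of degree one\<close>

lemma degree_one_add_of_int:
  fixes F :: "real \<Rightarrow> real"
  assumes "\<And>x. F (x + 1) = F x + 1"
  shows "F (x + of_int k) = F x + of_int k"
proof -
  have nat: "F (y + real m) = F y + real m" for y m
  proof (induction m)
    case (Suc m)
    have "F (y + real (Suc m)) = F ((y + real m) + 1)" by (simp add: ac_simps)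
    also have "\<dots> = F y + real (Suc m)" using Suc assms by simp
    finally show ?case .
  qed simp
  show ?thesis
  proof (cases "k \<ge> 0")
    case True
    then show ?thesis using nat[of x "nat k"] by simp
  next
    case False
    then show ?thesis using nat[of "x + of_int k" "nat (- k)"] by simp
  qed
qed

lemma funpow_degree_one_add_of_int:
  fixes F :: "real \<Rightarrow> real"
  assumes "\<And>x. F (x + 1) = F x + 1"
  shows "(F ^^ n) (x + of_int k) = (F ^^ n) x + of_int k"
  by (induction n) (simp_all add: degree_one_add_of_int[where F = F, OF assms])

lemma LIMSEQ_divide_of_bounded_dist:
  fixes a :: "nat \<Rightarrow> real"
  assumes "\<And>n. \<bar>a n - real n * c\<bar> \<le> C"
  shows "(\<lambda>n. a n / real n) \<longlonglongrightarrow> c"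
proof (rule tendsto_sandwich)
  show "(\<lambda>n. c - C / real n) \<longlonglongrightarrow> c" "(\<lambda>n. c + C / real n) \<longlonglongrightarrow> c"
    using tendsto_diff[OF tendsto_const lim_const_over_n[of C]]
      tendsto_add[OF tendsto_const lim_const_over_n[of C]] by simp_all
  have close: "\<bar>a n / real n - c\<bar> \<le> C / real n" if "0 < n" for n
  proof -
    have "a n / real n - c = (a n - real n * c) / real n" using that by (simp add: field_simps)
    then show ?thesis using assms[of n] that by (simp add: abs_divide divide_right_mono)
  qed
  have "\<forall>\<^sub>F n in sequentially. \<bar>a n / real n - c\<bar> \<le> C / real n"
    using eventually_gt_at_top[of 0] by (rule eventually_mono) (rule close)
  then show "\<forall>\<^sub>F n in sequentially. c - C / real n \<le> a n / real n"
    "\<forall>\<^sub>F n in sequentially. a n / real n \<le> c + C / real n"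
    by (eventually_elim, simp add: abs_le_iff algebra_simps)+
qed

lemma funpow_mult_bounds:
  fixes F :: "real \<Rightarrow> real" and p q :: nat and x0 y0 :: real
  assumes mono: "mono F" and degree_one: "\<And>x. F (x + 1) = F x + 1"
    and lower: "x0 + q \<le> (F ^^ p) x0" and upper: "(F ^^ p) y0 \<le> y0 + q"
  shows "x0 + q * k \<le> (F ^^ (p * k)) x0 \<and> (F ^^ (p * k)) y0 \<le> y0 + q * k"
proof (induction k)
  case (Suc k)
  note iter_add_of_int = funpow_degree_one_add_of_int[where F = F, OF degree_one]
  have "(F ^^ (p * Suc k)) = (F ^^ p) \<circ> (F ^^ (p * k))" by (simp add: funpow_add)
  moreover have "(F ^^ p) (x0 + real (q * k)) \<le> (F ^^ p) ((F ^^ (p * k)) x0)"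
    "(F ^^ p) ((F ^^ (p * k)) y0) \<le> (F ^^ p) (y0 + real (q * k))"
    using Suc by (auto intro!: funpow_mono mono)
  ultimately show ?case
    using lower upper iter_add_of_int[of p x0 "int (q * k)"] iter_add_of_int[of p y0 "int (q * k)"]
    by (simp add: algebra_simps)
qed simp

text \<open>If the p-th iterate of a lift of degree one moves some point by at least q turns and some
  point by at most q turns, its rotation number is q / p.\<close>

lemma funpow_degree_one_dist_linear:
  fixes F :: "real \<Rightarrow> real" and p q :: nat and x0 y0 :: real
  assumes mono: "mono F" and degree_one: "\<And>x. F (x + 1) = F x + 1"
    and above: "\<And>x. x \<le> F x" and below: "\<And>x. F x \<le> x + 1" and "0 < p"
    and lower: "x0 + q \<le> (F ^^ p) x0" and upper: "(F ^^ p) y0 \<le> y0 + q"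
  shows "\<bar>(F ^^ n) 0 - real n * (q / p)\<bar> \<le> p + q + 1"
proof -
  note iter_add_of_int = funpow_degree_one_add_of_int[where F = F, OF degree_one]
  have iter_above: "x \<le> (F ^^ n) x" for n x
    by (induction n) (auto intro: order_trans above)
  have iter_below: "(F ^^ n) x \<le> x + n" for n x
    by (induction n) (auto intro: order_trans below)
  have iter_mult: "x0 + q * k \<le> (F ^^ (p * k)) x0 \<and> (F ^^ (p * k)) y0 \<le> y0 + q * k" for k
    using funpow_mult_bounds[OF mono degree_one lower upper] .
  define k where "k = n div p"
  define r where "r = n mod p"
  have n: "n = r + p * k" and r: "r < p" using \<open>0 < p\<close> by (simp_all add: k_def r_def)
  have iter_n: "(F ^^ n) x = (F ^^ r) ((F ^^ (p * k)) x)" for x by (simp add: n funpow_add)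
  have "(F ^^ n) (x0 - of_int \<lceil>x0\<rceil>) \<le> (F ^^ n) 0"
    by (intro funpow_mono mono) simp
  moreover have "x0 + q * k \<le> (F ^^ n) x0"
    using iter_mult[of k] iter_above[of "(F ^^ (p * k)) x0" r] by (simp add: iter_n)
  moreover have "(F ^^ n) (x0 - of_int \<lceil>x0\<rceil>) = (F ^^ n) x0 - of_int \<lceil>x0\<rceil>"
    using iter_add_of_int[of n x0 "- \<lceil>x0\<rceil>"] by simp
  moreover have "x0 - of_int \<lceil>x0\<rceil> > -1" by linarith
  ultimately have low: "real (q * k) - 1 \<le> (F ^^ n) 0" by linarith
  have "(F ^^ n) 0 \<le> (F ^^ n) (y0 + of_int \<lceil>- y0\<rceil>)"
    by (intro funpow_mono mono) linarith
  moreover have "(F ^^ n) y0 \<le> y0 + q * k + r"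
    using iter_mult[of k] iter_below[of r "(F ^^ (p * k)) y0"] by (simp add: iter_n)
  moreover have "y0 + of_int \<lceil>- y0\<rceil> < 1" by linarith
  ultimately have up: "(F ^^ n) 0 \<le> real (q * k) + r + 1"
    using iter_add_of_int[of n y0 "\<lceil>- y0\<rceil>"] by linarith
  have "real n * (q / p) = q * k + r * q / p" using \<open>0 < p\<close> by (simp add: n field_simps)
  moreover have "r * q / p \<le> q"
    using r \<open>0 < p\<close> by (simp add: field_simps) (metis mult.commute mult_le_mono2 less_imp_le of_nat_le_iff of_nat_mult)
  moreover have "real r \<le> p" "0 \<le> r * q / p" using r by simp_all
  ultimately show ?thesis using low up unfolding abs_le_iff by linarith
qed

section \<open>Plane geometry\<close>

lemma inner_real2: "inner (x::real^2) y = x$1 * y$1 + x$2 * y$2"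
  by (simp add: inner_vec_def sum_2)

lemma norm_real2_power2: "(norm (x::real^2))\<^sup>2 = (x$1)\<^sup>2 + (x$2)\<^sup>2"
  by (subst power2_norm_eq_inner) (simp add: inner_real2 power2_eq_square)

lemma real2_eq_iff: "(x::real^2) = y \<longleftrightarrow> x$1 = y$1 \<and> x$2 = y$2"
  by (metis exhaust_2 vec_eq_iff)

lemma norm_vector2: "norm (vector [a, b] :: real^2) = sqrt (a\<^sup>2 + b\<^sup>2)"
  by (simp add: norm_eq_sqrt_inner inner_real2 power2_eq_square)

lemma cross2_commute: "cross2 u v = - cross2 v u"
  by (simp add: cross2_def)

lemma cross2_reverse_chord: "cross2 (q - p) (v - p) = - cross2 (p - q) (v - q)"
  by (simp add: cross2_def algebra_simps)

lemma cross2_convex_combination: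
  assumes "a + b + c = 1"
  shows "cross2 u (a *\<^sub>R A + b *\<^sub>R B + c *\<^sub>R C - p) =
     a * cross2 u (A - p) + b * cross2 u (B - p) + c * cross2 u (C - p)"
proof -
  have c: "c = 1 - a - b" using assms by simp
  show ?thesis unfolding cross2_def c by (simp add: algebra_simps)
qed

lemma cross2_convex_hull_3_nonneg:
  assumes "\<forall>X\<in>{A, B, C}. 0 \<le> cross2 u (X - p)" "x \<in> convex hull {A, B, C}"
  shows "0 \<le> cross2 u (x - p)"
proof -
  obtain a b c where "x = a *\<^sub>R A + b *\<^sub>R B + c *\<^sub>R C" "0 \<le> a" "0 \<le> b" "0 \<le> c" "a + b + c = 1"
    using assms(2) unfolding convex_hull_3 by blast
  then show ?thesis using assms(1) by (simp add: cross2_convex_combination)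
qed

lemma cross2_convex_hull_3_pos:
  assumes "\<forall>X\<in>{A, B, C}. 0 < cross2 u (X - p)" "x \<in> convex hull {A, B, C}"
  shows "0 < cross2 u (x - p)"
proof -
  obtain a b c where x: "x = a *\<^sub>R A + b *\<^sub>R B + c *\<^sub>R C" "0 \<le> a" "0 \<le> b" "0 \<le> c" "a + b + c = 1"
    using assms(2) unfolding convex_hull_3 by blast
  then have "0 \<le> a * cross2 u (A - p)" "0 \<le> b * cross2 u (B - p)" "0 \<le> c * cross2 u (C - p)"
    using assms(1) by simp_all
  moreover have "0 < a \<or> 0 < b \<or> 0 < c" using x by linarith
  then have "0 < a * cross2 u (A - p) \<or> 0 < b * cross2 u (B - p) \<or> 0 < c * cross2 u (C - p)"
    using assms(1) by auto
  moreover have "cross2 u (x - p) = a * cross2 u (A - p) + b * cross2 u (B - p) + c * cross2 u (C - p)"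
    using x by (simp add: cross2_convex_combination)
  ultimately show ?thesis by linarith
qed

lemma cross2_scaleR_linear_combination:
  "cross2 (a *\<^sub>R p + b *\<^sub>R q) (c *\<^sub>R p + d *\<^sub>R q) = (a * d - b * c) * cross2 p q"
  by (simp add: cross2_def algebra_simps)

lemma cross2_power2_add_inner_power2:
  "(cross2 p q)\<^sup>2 + (inner p q)\<^sup>2 = (norm p)\<^sup>2 * (norm q)\<^sup>2"
  unfolding cross2_def inner_real2 norm_real2_power2 by (simp add: power2_eq_square algebra_simps)

lemma abs_cross2_le: "\<bar>cross2 p q\<bar> \<le> norm p * norm q"
proof -
  have "(cross2 p q)\<^sup>2 \<le> (norm p * norm q)\<^sup>2"
    using cross2_power2_add_inner_power2[of p q] zero_le_power2[of "inner p q"]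
    unfolding power_mult_distrib by linarith
  then show ?thesis by (metis abs_le_square_iff abs_mult abs_norm_cancel)
qed

lemma cross2_eq_0_iff: "cross2 u v = 0 \<longleftrightarrow> u = 0 \<or> v = 0 \<or> (\<exists>c. v = c *\<^sub>R u)"
proof
  assume cross: "cross2 u v = 0"
  show "u = 0 \<or> v = 0 \<or> (\<exists>c. v = c *\<^sub>R u)"
  proof (cases "u = 0")
    case False
    define c where "c = inner u v / inner u u"
    have "inner u (v - c *\<^sub>R u) = 0" using False by (simp add: c_def inner_diff_right)
    moreover have "cross2 u (v - c *\<^sub>R u) = 0" using cross by (simp add: cross2_def algebra_simps)
    ultimately have "(norm u)\<^sup>2 * (norm (v - c *\<^sub>R u))\<^sup>2 = 0"
      using cross2_power2_add_inner_power2[of u "v - c *\<^sub>R u"] by simp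
    then show ?thesis using False by auto
  qed simp
qed (auto simp: cross2_def)

lemma collinear_iff_cross2: "collinear {A, B, C} \<longleftrightarrow> cross2 (B - A) (C - A) = 0"
proof -
  have "collinear {A, B, C} \<longleftrightarrow> collinear {B, A, C}" by (simp add: insert_commute)
  also have "\<dots> \<longleftrightarrow> collinear {0, B - A, C - A}" by (rule collinear_3) simp
  finally show ?thesis by (simp add: collinear_lemma cross2_eq_0_iff)
qed

lemma obtain_longest_side:
  fixes A B C :: "'a::metric_space"
  obtains A' B' C' where "{A', B', C'} = {A, B, C}" "dist A' C' \<le> dist A' B'" "dist B' C' \<le> dist A' B'"
proof -
  consider "dist A C \<le> dist A B \<and> dist B C \<le> dist A B" | "dist A B \<le> dist A C \<and> dist C B \<le> dist A C"
    | "dist B A \<le> dist B C \<and> dist C A \<le> dist B C"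
    by (metis dist_commute linorder_le_cases order_trans)
  then show ?thesis
    by cases (use that[of A B C] that[of A C B] that[of B C A] in \<open>auto simp: insert_commute\<close>)
qed

lemma linear_isometry_cross2:
  fixes U :: "real^2 \<Rightarrow> real^2"
  assumes lin: "linear U" and norm_U: "\<And>y. norm (U y) = norm y"
  obtains \<epsilon> where "\<epsilon> = 1 \<or> \<epsilon> = -1" "\<And>u v. cross2 (U u) (U v) = \<epsilon> * cross2 u v"
proof -
  define e1 :: "real^2" where "e1 = axis 1 1"
  define e2 :: "real^2" where "e2 = axis 2 1"
  define \<epsilon> where "\<epsilon> = cross2 (U e1) (U e2)"
  have decomp: "U u = u$1 *\<^sub>R U e1 + u$2 *\<^sub>R U e2" for u
  proof -
    have "u = u$1 *\<^sub>R e1 + u$2 *\<^sub>R e2" by (simp add: real2_eq_iff e1_def e2_def axis_def)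
    then have "U u = U (u$1 *\<^sub>R e1 + u$2 *\<^sub>R e2)" by (rule arg_cong)
    also have "\<dots> = u$1 *\<^sub>R U e1 + u$2 *\<^sub>R U e2" by (simp add: linear_add[OF lin] linear_scale[OF lin])
    finally show ?thesis .
  qed
  have cross: "cross2 (U u) (U v) = \<epsilon> * cross2 u v" for u v
    unfolding decomp[of u] decomp[of v] cross2_scaleR_linear_combination \<epsilon>_def by (simp add: cross2_def)
  have unit: "norm (U e1) = 1" "norm (U e2) = 1" unfolding norm_U e1_def e2_def by simp_all
  have "(norm (U e1 - U e2))\<^sup>2 = 2"
  proof -
    have "U e1 - U e2 = U (e1 - e2)" using lin by (simp add: linear_diff)
    then have "norm (U e1 - U e2) = norm (e1 - e2)" using norm_U by simp
    moreover have "(norm (e1 - e2))\<^sup>2 = 2" unfolding norm_real2_power2 e1_def e2_def by (simp add: axis_def)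
    ultimately show ?thesis by simp
  qed
  moreover have "(norm (U e1 - U e2))\<^sup>2 = (norm (U e1))\<^sup>2 + (norm (U e2))\<^sup>2 - 2 * inner (U e1) (U e2)"
    by (simp add: power2_norm_eq_inner inner_diff algebra_simps inner_commute)
  ultimately have "inner (U e1) (U e2) = 0" using unit by simp
  then have "\<epsilon>\<^sup>2 = 1" using cross2_power2_add_inner_power2[of "U e1" "U e2"] unit unfolding \<epsilon>_def by simp
  then show ?thesis using that cross by (simp add: power2_eq_1_iff)
qed

lemma congruent_triangle_image:
  assumes "congruent (convex hull {x1, x2, x3}) S"
  obtains b U where "linear U" "\<And>y. norm (U y) = norm y"
    "S = convex hull {b + U x1, b + U x2, b + U x3}"
proof -
  obtain f where f: "\<forall>x y. dist (f x) (f y) = dist x y" and S: "f ` (convex hull {x1, x2, x3}) = S"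
    using assms unfolding congruent_def by blast
  define b where "b = f 0"
  define U where "U = (\<lambda>y. f y - b)"
  have "U 0 = 0" by (simp add: U_def b_def)
  moreover have "\<forall>x y. dist (U x) (U y) = dist x y" using f by (simp add: U_def dist_norm)
  ultimately have lin: "linear U" by (rule isometry_linear)
  have norm_U: "norm (U y) = norm y" for y using f unfolding U_def b_def by (simp add: dist_norm)
  have "f = (\<lambda>y. b + y) \<circ> U" unfolding U_def by auto
  then have "S = (\<lambda>y. b + y) ` (U ` (convex hull {x1, x2, x3}))"
    unfolding S [symmetric] by (simp add: image_comp)
  also have "\<dots> = convex hull {b + U x1, b + U x2, b + U x3}"
    by (simp add: convex_hull_linear_image [OF lin] flip: convex_hull_translation)
  finally show ?thesis using that lin norm_U by blast
qed

lemma similarity_real2: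
  fixes w M :: "real^2" and q \<sigma> :: real
  assumes "0 < q" "\<sigma> = 1 \<or> \<sigma> = -1"
  defines "\<Psi> \<equiv> \<lambda>y. vector [q * inner w (y - M), \<sigma> * q * cross2 w (y - M)] :: real^2"
  shows "dist (\<Psi> y) (\<Psi> y') = (q * norm w) * dist y y'"
    and "\<Psi> ` (convex hull {a, b, c}) = convex hull {\<Psi> a, \<Psi> b, \<Psi> c}"
proof -
  have \<sigma>\<sigma>: "\<sigma> * (\<sigma> * x) = x" for x using assms(2) by auto
  have "(dist (\<Psi> y) (\<Psi> y'))\<^sup>2 = q\<^sup>2 * ((inner w (y - y'))\<^sup>2 + (cross2 w (y - y'))\<^sup>2)"
    unfolding dist_norm norm_real2_power2 \<Psi>_def
    by (simp add: inner_real2 cross2_def power2_eq_square algebra_simps \<sigma>\<sigma>)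
  also have "\<dots> = (q * norm w * dist y y')\<^sup>2"
    using cross2_power2_add_inner_power2[of w "y - y'"] by (simp add: dist_norm power_mult_distrib algebra_simps)
  finally show "dist (\<Psi> y) (\<Psi> y') = (q * norm w) * dist y y'"
    using assms(1) by (simp add: power2_eq_iff_nonneg)
  have affine: "\<Psi> (u *\<^sub>R a + v *\<^sub>R b + t *\<^sub>R c) = u *\<^sub>R \<Psi> a + v *\<^sub>R \<Psi> b + t *\<^sub>R \<Psi> c"
    if "u + v + t = 1" for u v t
  proof -
    have t: "t = 1 - u - v" using that by simp
    show ?thesis unfolding \<Psi>_def real2_eq_iff t by (simp add: inner_real2 cross2_def algebra_simps)
  qed
  show "\<Psi> ` (convex hull {a, b, c}) = convex hull {\<Psi> a, \<Psi> b, \<Psi> c}"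
    unfolding convex_hull_3
  proof (intro set_eqI iffI)
    fix x assume "x \<in> \<Psi> ` {u *\<^sub>R a + v *\<^sub>R b + t *\<^sub>R c |u v t. 0 \<le> u \<and> 0 \<le> v \<and> 0 \<le> t \<and> u + v + t = 1}"
    then show "x \<in> {u *\<^sub>R \<Psi> a + v *\<^sub>R \<Psi> b + t *\<^sub>R \<Psi> c |u v t. 0 \<le> u \<and> 0 \<le> v \<and> 0 \<le> t \<and> u + v + t = 1}"
      using affine by blast
  next
    fix x assume "x \<in> {u *\<^sub>R \<Psi> a + v *\<^sub>R \<Psi> b + t *\<^sub>R \<Psi> c |u v t. 0 \<le> u \<and> 0 \<le> v \<and> 0 \<le> t \<and> u + v + t = 1}"
    then obtain u v t where "x = \<Psi> (u *\<^sub>R a + v *\<^sub>R b + t *\<^sub>R c)" "0 \<le> u" "0 \<le> v" "0 \<le> t" "u + v + t = 1"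
      using affine by auto
    then show "x \<in> \<Psi> ` {u *\<^sub>R a + v *\<^sub>R b + t *\<^sub>R c |u v t. 0 \<le> u \<and> 0 \<le> v \<and> 0 \<le> t \<and> u + v + t = 1}"
      by blast
  qed
qed

lemma translation_bound:
  fixes b y1 y2 y3 :: "'a::real_inner"
  assumes "0 \<le> m1" "0 \<le> m2" "0 \<le> m3" "m1 + m2 + m3 = 1" "m1 *\<^sub>R y1 + m2 *\<^sub>R y2 + m3 *\<^sub>R y3 = 0"
    and unit: "0 < m1 \<Longrightarrow> norm y1 = 1" "0 < m2 \<Longrightarrow> norm y2 = 1" "0 < m3 \<Longrightarrow> norm y3 = 1"
    and "0 \<le> l" and disk: "\<forall>y\<in>{y1, y2, y3}. norm (b + l *\<^sub>R y) < 1"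
  shows "(norm b)\<^sup>2 < 1 - l\<^sup>2"
proof -
  have "m1 * inner y1 b + m2 * inner y2 b + m3 * inner y3 b = 0"
    using arg_cong[OF assms(5), of "\<lambda>v. inner v b"] by (simp add: inner_add_left)
  then have "\<exists>y\<in>{y1, y2, y3}. norm y = 1 \<and> 0 \<le> inner y b"
    using assms(1-4) unit
    by (smt (verit, best) insertCI mult_nonneg_nonneg mult_pos_neg zero_less_mult_iff)
  then obtain y where y: "y \<in> {y1, y2, y3}" "norm y = 1" "0 \<le> inner y b" by blast
  have "(norm (b + l *\<^sub>R y))\<^sup>2 = (norm b)\<^sup>2 + 2 * l * inner y b + l\<^sup>2"
    using y(2) unfolding norm_eq_1 power2_norm_eq_inner
    by (simp add: inner_add inner_commute algebra_simps power2_eq_square)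
  moreover have "norm (b + l *\<^sub>R y) < 1" using disk y(1) by blast
  then have "(norm (b + l *\<^sub>R y))\<^sup>2 < 1" by (simp add: abs_square_less_1)
  ultimately show ?thesis using y(3) \<open>0 \<le> l\<close> by (smt (verit) mult_nonneg_nonneg)
qed

lemma cross2_cut_stable:
  assumes \<sigma>: "\<sigma> = 1 \<or> \<sigma> = -1" and "norm G = 1" "norm G' = 1" "norm Y \<le> 1"
    and cut: "\<sigma> * cross2 (G' - G) (Y - G) \<le> - \<kappa>"
    and "0 < l" "l \<le> 1" and small: "2 * norm b + 2 * (1 - l) < \<kappa>"
  shows "\<sigma> * cross2 (G' - G) (b + l *\<^sub>R Y - G) < 0"
proof -
  have "norm (G' - G) \<le> 2" using assms(2,3) norm_triangle_ineq4[of G' G] by simp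
  then have "norm (G' - G) * norm b \<le> 2 * norm b" "norm (G' - G) * norm Y \<le> 2 * 1"
    using mult_right_mono[OF _ norm_ge_zero] mult_mono[OF _ assms(4)] by simp_all
  then have "\<bar>cross2 (G' - G) b\<bar> \<le> 2 * norm b" "\<bar>cross2 (G' - G) Y\<bar> \<le> 2"
    using abs_cross2_le[of "G' - G" b] abs_cross2_le[of "G' - G" Y] by linarith+
  moreover have "cross2 (G' - G) (b + l *\<^sub>R Y - G) =
      cross2 (G' - G) (Y - G) - (1 - l) * cross2 (G' - G) Y + cross2 (G' - G) b"
    by (simp add: cross2_def algebra_simps)
  moreover have "\<bar>(1 - l) * cross2 (G' - G) Y\<bar> \<le> 2 * (1 - l)"
    using mult_left_mono[OF calculation(2), of "1 - l"] \<open>l \<le> 1\<close> by (simp add: abs_mult mult.commute)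
  ultimately show ?thesis using \<sigma> cut small by (auto simp: algebra_simps abs_le_iff)
qed

lemma ray_meets_circle:
  fixes G V :: "real^2"
  assumes "norm V < 1" "V \<noteq> G"
  obtains \<mu> where "1 \<le> \<mu>" "norm (G + \<mu> *\<^sub>R (V - G)) = 1"
proof -
  define u where "u = V - G"
  define M where "M = (1 + norm G) / norm u + 1"
  have "0 < norm u" using assms(2) by (simp add: u_def)
  then have "1 \<le> M" "M * norm u = 1 + norm G + norm u"
    by (simp_all add: M_def field_simps)
  moreover have "M * norm u - norm G \<le> norm (G + M *\<^sub>R u)"
    using norm_triangle_ineq2[of "M *\<^sub>R u" "- G"] \<open>1 \<le> M\<close> by (simp add: algebra_simps)
  ultimately have "1 \<le> norm (G + M *\<^sub>R u)" using \<open>0 < norm u\<close> by linarith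
  moreover have "norm (G + 1 *\<^sub>R u) \<le> 1" using assms(1) by (simp add: u_def)
  moreover have "continuous_on {1..M} (\<lambda>\<mu>. norm (G + \<mu> *\<^sub>R u))" by (intro continuous_intros)
  ultimately obtain \<mu> where "1 \<le> \<mu>" "norm (G + \<mu> *\<^sub>R u) = 1"
    using IVT'[of "\<lambda>\<mu>. norm (G + \<mu> *\<^sub>R u)" 1 1 M] \<open>1 \<le> M\<close> by auto
  then show ?thesis using that by (simp add: u_def)
qed

lemma cross2_ray_points:
  "cross2 ((G + b *\<^sub>R q) - (G + a *\<^sub>R p)) ((G + d *\<^sub>R r) - (G + a *\<^sub>R p)) =
     b * d * cross2 q r + a * b * cross2 p q + a * d * cross2 r p"
  by (simp add: cross2_def algebra_simps)

lemma cross2_ray_chord_nonneg: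
  assumes "1 \<le> a" "1 \<le> b" "0 < c" "cross2 p q = c" "cross2 q r = c" "cross2 r p = c"
  shows "\<forall>X\<in>{G + p, G + q, G + r}. 0 \<le> cross2 ((G + b *\<^sub>R q) - (G + a *\<^sub>R p)) (X - (G + a *\<^sub>R p))"
proof -
  have "cross2 p p = 0" "cross2 q q = 0" "cross2 q p = - c" "cross2 p r = - c"
    using assms(4,6) cross2_commute[of q p] cross2_commute[of p r] by (simp_all add: cross2_def)
  then have "cross2 ((G + b *\<^sub>R q) - (G + a *\<^sub>R p)) ((G + 1 *\<^sub>R X) - (G + a *\<^sub>R p)) \<ge> 0"
    if "X \<in> {p, q, r}" for X
    using that assms by (auto simp only: cross2_ray_points) (auto simp: algebra_simps)
  then show ?thesis by simp
qed

section \<open>Chords of the unit circle\<close>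

lemma circ_nth [simp]: "circ t $ 1 = cos (2*pi*t)" "circ t $ 2 = sin (2*pi*t)"
  by (simp_all add: circ_def)

lemma norm_circ [simp]: "norm (circ t) = 1"
  using norm_real2_power2[of "circ t"] norm_ge_zero[of "circ t"] by (simp add: power2_eq_1_iff)

lemma circ_eq_iff: "circ s = circ t \<longleftrightarrow> (\<exists>n::int. s = t + n)"
proof -
  have "circ s = circ t \<longleftrightarrow> (\<exists>n::int. 2 * pi * s = 2 * pi * t + 2 * pi * of_int n)"
    unfolding real2_eq_iff circ_nth using sin_cos_eq_iff[of "2 * pi * s" "2 * pi * t"] by auto
  also have "\<dots> \<longleftrightarrow> (\<exists>n::int. s = t + n)"
    by (simp flip: distrib_left)
  finally show ?thesis .
qed

lemma circ_add_of_int [simp]: "circ (t + of_int n) = circ t"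
  by (auto simp: circ_eq_iff)

lemma circ_diff_of_int [simp]: "circ (t - of_int n) = circ t"
  using circ_add_of_int[of t "- n"] by simp

lemma circ_add_1 [simp]: "circ (t + 1) = circ t"
  using circ_add_of_int[of t 1] by simp

lemma circ_add_neq:
  assumes "0 < d" "d < 1"
  shows "circ (t + d) \<noteq> circ t"
proof
  assume "circ (t + d) = circ t"
  then obtain n :: int where "d = n" by (auto simp: circ_eq_iff)
  with assms have "0 < n" "n < 1" by simp_all
  then show False by simp
qed

lemma circ_surj:
  assumes "norm P = 1"
  obtains t where "circ t = P"
proof -
  have "(P$1)\<^sup>2 + (P$2)\<^sup>2 = 1" using assms norm_real2_power2[of P] by simp
  then obtain \<theta> where "P$1 = cos \<theta>" "P$2 = sin \<theta>" by (rule sincos_total_2pi)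
  then have "circ (\<theta> / (2*pi)) = P" by (simp add: real2_eq_iff)
  then show ?thesis by (rule that)
qed

lemma circ_surj_after:
  assumes "norm P = 1"
  obtains d where "0 \<le> d" "d < 1" "circ (s + d) = P"
proof -
  obtain t where t: "circ t = P" using circ_surj[OF assms] by blast
  define d where "d = (t - s) - \<lfloor>t - s\<rfloor>"
  have "circ (s + d) = P" unfolding d_def using t by simp
  moreover have "0 \<le> d" "d < 1" unfolding d_def by linarith+
  ultimately show ?thesis using that by blast
qed

lemma inner_circ_lt_1:
  assumes "norm X \<le> 1" "X \<noteq> circ t"
  shows "inner (circ t) X < 1"
proof -
  have "0 < (norm (circ t - X))\<^sup>2" using assms(2) by simp
  also have "\<dots> = 1 - 2 * inner (circ t) X + (norm X)\<^sup>2"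
    by (simp add: power2_norm_eq_inner inner_diff inner_commute)
      (metis norm_circ dot_square_norm one_power2)
  finally show ?thesis using assms(1) by (smt (verit) norm_ge_zero power_le_one)
qed

text \<open>For X in the disk, circ (t + chord_offset X t) is the far end of the chord from circ t
  through X (lemma sgn_cross2_chord).\<close>

definition chord_offset :: "real^2 \<Rightarrow> real \<Rightarrow> real" where
  "chord_offset X t = 1/2 - arctan (cross2 (circ t) X / (1 - inner (circ t) X)) / pi"

lemma chord_offset_bounds: "0 < chord_offset X t" "chord_offset X t < 1"
  using arctan_lbound[of "cross2 (circ t) X / (1 - inner (circ t) X)"]
    arctan_ubound[of "cross2 (circ t) X / (1 - inner (circ t) X)"]
  by (auto simp: chord_offset_def field_simps)

lemma chord_offset_add_1 [simp]: "chord_offset X (t + 1) = chord_offset X t"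
  by (simp add: chord_offset_def)

lemma cross2_circ_chord:
  "cross2 (circ (t + d) - circ t) (X - circ t) =
     2 * sin (pi*d) * (cos (pi*d) * (1 - inner (circ t) X) - sin (pi*d) * cross2 (circ t) X)"
proof -
  define c where "c = cos (2*pi*t)"
  define s where "s = sin (2*pi*t)"
  define a where "a = sin (pi*d)"
  define b where "b = cos (pi*d)"
  have cd: "cos (2*pi*d) = 1 - 2*a\<^sup>2"
    using cos_double_sin[of "pi*d"] by (simp add: a_def mult.assoc)
  have sd: "sin (2*pi*d) = 2*a*b"
    using sin_double[of "pi*d"] by (simp add: a_def b_def mult.assoc)
  have e1: "cos (2*pi*(t+d)) = c*(1-2*a\<^sup>2) - s*(2*a*b)"
    by (simp add: distrib_left cos_add c_def s_def cd sd)
  have e2: "sin (2*pi*(t+d)) = s*(1-2*a\<^sup>2) + c*(2*a*b)"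
    by (simp add: distrib_left sin_add c_def s_def cd sd)
  have cs: "c\<^sup>2 + s\<^sup>2 = 1" by (simp add: c_def s_def)
  have "cross2 (circ (t+d) - circ t) (X - circ t) =
    (c*(1-2*a\<^sup>2) - s*(2*a*b) - c) * (X$2 - s) - (s*(1-2*a\<^sup>2) + c*(2*a*b) - s) * (X$1 - c)"
    unfolding cross2_def by (simp add: e1 e2 c_def s_def)
  also have "\<dots> = 2*a*(b*(c\<^sup>2+s\<^sup>2) - b*(c*X$1 + s*X$2) - a*(c*X$2 - s*X$1))"
    by (simp add: algebra_simps power2_eq_square)
  also have "\<dots> = 2 * a * (b * (1 - inner (circ t) X) - a * cross2 (circ t) X)"
    unfolding cs by (simp add: c_def s_def inner_real2 cross2_def algebra_simps)
  finally show ?thesis by (simp add: a_def b_def)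
qed

lemma sgn_cos:
  assumes "-(pi/2) < \<theta>" "\<theta> < 3*pi/2"
  shows "sgn (cos \<theta>) = sgn (pi/2 - \<theta>)"
proof (cases \<theta> "pi/2" rule: linorder_cases)
  case less
  then have "0 < cos \<theta>" using assms by (intro cos_gt_zero_pi) auto
  then show ?thesis using less by simp
next
  case equal
  show ?thesis unfolding equal by simp
next
  case greater
  then have "0 < sin (\<theta> - pi/2)" using assms by (intro sin_gt_zero) auto
  then have "cos \<theta> < 0" by (simp add: sin_diff)
  then show ?thesis using greater by simp
qed

lemma sgn_cross2_chord:
  assumes "norm X \<le> 1" "X \<noteq> circ t" "0 < d" "d < 1"
  shows "sgn (cross2 (circ (t + d) - circ t) (X - circ t)) = sgn (chord_offset X t - d)"
proof -
  define r where "r = 1 - inner (circ t) X"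
  define \<beta> where "\<beta> = arctan (cross2 (circ t) X / r)"
  have r: "0 < r" using inner_circ_lt_1[OF assms(1,2)] by (simp add: r_def)
  have cos_\<beta>: "0 < cos \<beta>" by (simp add: \<beta>_def cos_arctan add_pos_nonneg)
  have tan_\<beta>: "cross2 (circ t) X = r * (sin \<beta> / cos \<beta>)"
    using r tan_arctan[of "cross2 (circ t) X / r"] by (simp add: \<beta>_def tan_def)
  have "cross2 (circ (t + d) - circ t) (X - circ t) =
      (2 * sin (pi*d) * r / cos \<beta>) * (cos (pi*d) * cos \<beta> - sin (pi*d) * sin \<beta>)"
    unfolding cross2_circ_chord r_def [symmetric] tan_\<beta> using cos_\<beta> by (simp add: field_simps)
  also have "\<dots> = (2 * sin (pi*d) * r / cos \<beta>) * cos (pi*d + \<beta>)"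
    by (simp add: cos_add)
  finally have cross: "cross2 (circ (t + d) - circ t) (X - circ t) =
      (2 * sin (pi*d) * r / cos \<beta>) * cos (pi*d + \<beta>)" .
  have "0 < sin (pi*d)" using assms(3,4) by (intro sin_gt_zero) auto
  then have factor: "sgn (2 * sin (pi*d) * r / cos \<beta>) = 1" using r cos_\<beta> by simp
  have "-(pi/2) < \<beta>" "\<beta> < pi/2"
    unfolding \<beta>_def by (rule arctan_lbound, rule arctan_ubound)
  moreover have "0 < pi*d" "pi*d < pi" using assms(3,4) by simp_all
  ultimately have "sgn (cos (pi*d + \<beta>)) = sgn (pi/2 - (pi*d + \<beta>))"
    by (intro sgn_cos) linarith+
  also have "pi/2 - (pi*d + \<beta>) = pi * (chord_offset X t - d)"
    by (simp add: chord_offset_def \<beta>_def r_def algebra_simps)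
  finally show ?thesis unfolding cross sgn_mult factor by simp
qed

lemma sgn_cross2_chord_interior:
  assumes "norm X < 1" "0 < d" "d < 1"
  shows "sgn (cross2 (circ (t + d) - circ t) (X - circ t)) = sgn (chord_offset X t - d)"
  using assms norm_circ[of t] by (intro sgn_cross2_chord) auto

lemma chord_offset_circ:
  assumes "0 < e" "e < 1"
  shows "chord_offset (circ (t + e)) t = e"
proof -
  have "sgn (chord_offset (circ (t + e)) t - e) = 0"
    using sgn_cross2_chord[OF _ circ_add_neq[OF assms] assms] by (simp add: cross2_def)
  then show ?thesis by (simp add: sgn_0_0)
qed

lemma cross2_circ_pos:
  assumes "p < q" "q < r" "r < p + 1"
  shows "cross2 (circ q - circ p) (circ r - circ p) > 0"
proof -
  have d: "0 < q - p" "q - p < 1" and e: "0 < r - p" "r - p < 1" using assms by auto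
  have "sgn (cross2 (circ (p + (q - p)) - circ p) (circ (p + (r - p)) - circ p)) =
      sgn (chord_offset (circ (p + (r - p))) p - (q - p))"
    by (rule sgn_cross2_chord[OF _ circ_add_neq[OF e] d]) simp
  then show ?thesis using chord_offset_circ[OF e, of p] assms by (simp add: sgn_1_pos)
qed

lemma circ_parametrization:
  assumes "norm P1 = 1" "norm P2 = 1" "norm P3 = 1" "cross2 (P2 - P1) (P3 - P1) > 0"
  obtains x y z where "x < y" "y < z" "z < x + 1" "circ x = P1" "circ y = P2" "circ z = P3"
proof -
  obtain x where x: "circ x = P1" using circ_surj[OF assms(1)] by blast
  obtain d where d: "0 \<le> d" "d < 1" "circ (x + d) = P2" using circ_surj_after[OF assms(2)] by blast
  obtain e where e: "0 \<le> e" "e < 1" "circ (x + e) = P3" using circ_surj_after[OF assms(3)] by blast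
  have "d \<noteq> 0" "e \<noteq> 0" using assms(4) d e x by (auto simp: cross2_def)
  then have "0 < d" "0 < e" using d e by simp_all
  then have "sgn (cross2 (circ (x + d) - circ x) (circ (x + e) - circ x)) =
      sgn (chord_offset (circ (x + e)) x - d)"
    using \<open>0 < d\<close> \<open>0 < e\<close> d(2) e(2) by (intro sgn_cross2_chord circ_add_neq) simp_all
  then have "sgn (chord_offset (circ (x + e)) x - d) = 1"
    using assms(4) d e x by (simp add: sgn_1_pos)
  then have "d < e" using chord_offset_circ[OF \<open>0 < e\<close> e(2)] by (simp add: sgn_1_pos)
  then show ?thesis using that[of x "x + d" "x + e"] x d e \<open>0 < d\<close> by simp
qed

definition chord_lift :: "real^2 \<Rightarrow> real \<Rightarrow> real" where
  "chord_lift X t = t + chord_offset X t"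

lemma chord_lift_add_1 [simp]: "chord_lift X (t + 1) = chord_lift X t + 1"
  by (simp add: chord_lift_def)

lemma has_real_derivative_inner_circ:
  "((\<lambda>t. inner (circ t) X) has_real_derivative 2 * pi * cross2 (circ t) X) (at t)"
  unfolding inner_real2 cross2_def circ_nth
  by (rule derivative_eq_intros refl | simp)+ (simp add: algebra_simps)

lemma has_real_derivative_cross2_circ:
  "((\<lambda>t. cross2 (circ t) X) has_real_derivative - 2 * pi * inner (circ t) X) (at t)"
  unfolding inner_real2 cross2_def circ_nth
  by (rule derivative_eq_intros refl | simp)+ (simp add: algebra_simps)

lemma has_real_derivative_chord_lift:
  assumes "norm X < 1"
  shows "(chord_lift X has_real_derivative
     (1 - (norm X)\<^sup>2) / ((1 - inner (circ t) X)\<^sup>2 + (cross2 (circ t) X)\<^sup>2)) (at t)"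
proof -
  define a where "a = inner (circ t) X"
  define b where "b = cross2 (circ t) X"
  define D where "D = (1 - a)\<^sup>2 + b\<^sup>2"
  have "a < 1" unfolding a_def using assms norm_circ[of t] by (intro inner_circ_lt_1) auto
  then have a: "1 - a \<noteq> 0" and D: "0 < D" by (simp_all add: D_def add_pos_nonneg)
  have dq: "((\<lambda>t. cross2 (circ t) X / (1 - inner (circ t) X)) has_real_derivative
      (- 2 * pi * a * (1 - a) + 2 * pi * b * b) / (1 - a)\<^sup>2) (at t)"
    using DERIV_divide[OF has_real_derivative_cross2_circ[where X=X and t=t]
        DERIV_diff[OF DERIV_const[of 1] has_real_derivative_inner_circ[where X=X and t=t]]] a
    by (simp add: a_def b_def power2_eq_square algebra_simps)
  have "inverse (1 + (b / (1 - a))\<^sup>2) * ((- 2 * pi * a * (1 - a) + 2 * pi * b * b) / (1 - a)\<^sup>2)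
      = 2 * pi * (b\<^sup>2 - a + a\<^sup>2) / D"
  proof -
    have "1 + (b / (1 - a))\<^sup>2 = D / (1 - a)\<^sup>2" using a by (simp add: D_def power_divide field_simps)
    moreover have "- 2 * pi * a * (1 - a) + 2 * pi * b * b = 2 * pi * (b\<^sup>2 - a + a\<^sup>2)"
      by (simp add: algebra_simps power2_eq_square)
    ultimately show ?thesis using a D by (simp add: inverse_eq_divide)
  qed
  then have "((\<lambda>t. arctan (cross2 (circ t) X / (1 - inner (circ t) X))) has_real_derivative
      2 * pi * (b\<^sup>2 - a + a\<^sup>2) / D) (at t)"
    using DERIV_chain2[OF DERIV_arctan dq] by (simp add: a_def b_def)
  from DERIV_add[OF DERIV_ident DERIV_diff[OF DERIV_const DERIV_cdivide[OF this, of pi]]]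
  have "(chord_lift X has_real_derivative 1 + (0 - 2 * pi * (b\<^sup>2 - a + a\<^sup>2) / D / pi)) (at t)"
    by (simp add: chord_lift_def [abs_def] chord_offset_def)
  moreover have "(norm X)\<^sup>2 = a\<^sup>2 + b\<^sup>2"
    using cross2_power2_add_inner_power2[of "circ t" X] by (simp add: a_def b_def)
  then have "D - 2 * (b\<^sup>2 - a + a\<^sup>2) = 1 - (norm X)\<^sup>2"
    by (simp add: D_def algebra_simps power2_eq_square)
  then have "1 + (0 - 2 * pi * (b\<^sup>2 - a + a\<^sup>2) / D / pi) = (1 - (norm X)\<^sup>2) / D"
    using D by (simp add: diff_divide_distrib flip: \<open>D - _ = _\<close>)
  ultimately show ?thesis by (simp add: D_def a_def b_def)
qed

lemma mono_chord_lift: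
  assumes "norm X < 1"
  shows "mono (chord_lift X)"
proof (rule monoI)
  fix x y :: real
  assume "x \<le> y"
  have "(norm X)\<^sup>2 \<le> 1" using assms by (simp add: abs_square_le_1)
  then show "chord_lift X x \<le> chord_lift X y"
    using has_real_derivative_chord_lift[OF assms]
    by (intro DERIV_nonneg_imp_nondecreasing[OF \<open>x \<le> y\<close>]) fastforce
qed

section \<open>The circle map of a triangle\<close>

lemma psi_offset_triangle:
  assumes "norm A < 1" "norm B < 1" "norm C < 1"
  shows "psi_offset (convex hull {A,B,C}) t = min (chord_offset A t) (min (chord_offset B t) (chord_offset C t))"
proof -
  define m where "m = min (chord_offset A t) (min (chord_offset B t) (chord_offset C t))"
  define cr where "cr = (\<lambda>d X. cross2 (circ (t + d) - circ t) (X - circ t))"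
  define Z where "Z = {d. 0 < d \<and> d < 1 \<and> supports (convex hull {A,B,C}) (circ t) (circ (t + d))}"
  have sgn_cr: "sgn (cr d X) = sgn (chord_offset X t - d)" if "X \<in> {A,B,C}" "0 < d" "d < 1" for X d
    unfolding cr_def using that assms by (intro sgn_cross2_chord_interior) auto
  have m: "0 < m" "m < 1" unfolding m_def using chord_offset_bounds by (auto simp: min_def)
  have "m \<in> Z"
  proof -
    have "0 \<le> cr m X" if "X \<in> {A,B,C}" for X
      using sgn_cr[OF that m] that by (auto simp: m_def sgn_if split: if_splits)
    then have "\<forall>x\<in>convex hull {A,B,C}. 0 \<le> cross2 (circ (t + m) - circ t) (x - circ t)"
      unfolding cr_def using cross2_convex_hull_3_nonneg by blast
    moreover have "m = chord_offset A t \<or> m = chord_offset B t \<or> m = chord_offset C t"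
      unfolding m_def by linarith
    then obtain X where "X \<in> {A,B,C}" "chord_offset X t = m" by blast
    then have "X \<in> convex hull {A,B,C}" "cr m X = 0"
      using sgn_cr[of X m] m by (auto simp: hull_inc sgn_0_0)
    ultimately show ?thesis
      unfolding Z_def supports_def cr_def using m circ_add_neq[OF m, of t] by fastforce
  qed
  moreover have "m \<le> d" if "d \<in> Z" for d
  proof (rule ccontr)
    assume "\<not> m \<le> d"
    from that have d: "0 < d" "d < 1" unfolding Z_def by auto
    have "0 < cr d X" if "X \<in> {A,B,C}" for X
      using sgn_cr[OF that d] that \<open>\<not> m \<le> d\<close> by (auto simp: m_def sgn_if split: if_splits)
    then have "\<forall>x\<in>convex hull {A,B,C}. 0 < cross2 (circ (t + d) - circ t) (x - circ t)"
      unfolding cr_def using cross2_convex_hull_3_pos by blast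
    with \<open>d \<in> Z\<close> show False unfolding Z_def supports_def by fastforce
  qed
  ultimately have "Inf Z = m" by (rule cInf_eq_minimum)
  then show ?thesis unfolding psi_offset_def Z_def m_def .
qed

context
  fixes A B C :: "real^2"
  assumes interior: "norm A < 1" "norm B < 1" "norm C < 1"
begin

lemma psi_lift_triangle:
  "psi_lift (convex hull {A,B,C}) t = min (chord_lift A t) (min (chord_lift B t) (chord_lift C t))"
  using psi_offset_triangle[OF interior] by (simp add: psi_lift_def chord_lift_def min_add_distrib_left)

lemma mono_psi_lift_triangle: "mono (psi_lift (convex hull {A,B,C}))"
  using mono_chord_lift[OF interior(1)] mono_chord_lift[OF interior(2)] mono_chord_lift[OF interior(3)]
  by (auto simp: mono_def psi_lift_triangle min_le_iff_disj)

lemma psi_lift_triangle_add_1: "psi_lift (convex hull {A,B,C}) (t + 1) = psi_lift (convex hull {A,B,C}) t + 1"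
  by (simp add: psi_lift_triangle)

lemma psi_lift_triangle_bounds:
  "t \<le> psi_lift (convex hull {A,B,C}) t" "psi_lift (convex hull {A,B,C}) t \<le> t + 1"
  using chord_offset_bounds[of A t] chord_offset_bounds[of B t] chord_offset_bounds[of C t]
  by (auto simp: psi_lift_triangle chord_lift_def min_def)

lemma psi_lift_triangle_ge:
  assumes "x < z" "z < x + 1" and left: "\<forall>X\<in>{A,B,C}. 0 \<le> cross2 (circ z - circ x) (X - circ x)"
  shows "z \<le> psi_lift (convex hull {A,B,C}) x"
proof -
  have d: "0 < z - x" "z - x < 1" using assms(1,2) by simp_all
  have "z \<le> chord_lift X x" if "X \<in> {A,B,C}" for X
  proof -
    have "sgn (cross2 (circ (x + (z - x)) - circ x) (X - circ x)) = sgn (chord_offset X x - (z - x))"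
      using that interior d by (intro sgn_cross2_chord_interior) auto
    then show ?thesis using left that by (auto simp: chord_lift_def sgn_if split: if_splits)
  qed
  then show ?thesis by (simp add: psi_lift_triangle)
qed

lemma psi_lift_triangle_le:
  assumes "x < z" "z < x + 1" and right: "\<exists>X\<in>{A,B,C}. cross2 (circ z - circ x) (X - circ x) \<le> 0"
  shows "psi_lift (convex hull {A,B,C}) x \<le> z"
proof -
  have d: "0 < z - x" "z - x < 1" using assms(1,2) by simp_all
  from right obtain X where X: "X \<in> {A,B,C}" "cross2 (circ z - circ x) (X - circ x) \<le> 0" by blast
  have "sgn (cross2 (circ (x + (z - x)) - circ x) (X - circ x)) = sgn (chord_offset X x - (z - x))"
    using X interior d by (intro sgn_cross2_chord_interior) auto
  then have "chord_lift X x \<le> z" using X by (auto simp: chord_lift_def sgn_if split: if_splits)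
  then show ?thesis using X by (auto simp: psi_lift_triangle)
qed

lemma psi_lift_triangle_cube_ge_if_inscribed:
  assumes "norm P1 = 1" "norm P2 = 1" "norm P3 = 1" "cross2 (P2 - P1) (P3 - P1) > 0"
    and "\<forall>X\<in>{A,B,C}. 0 \<le> cross2 (P2 - P1) (X - P1) \<and> 0 \<le> cross2 (P3 - P2) (X - P2) \<and>
        0 \<le> cross2 (P1 - P3) (X - P3)"
  shows "\<exists>x. x + 1 \<le> (psi_lift (convex hull {A,B,C}) ^^ 3) x"
proof -
  define F where "F = psi_lift (convex hull {A,B,C})"
  obtain x y z where xyz: "x < y" "y < z" "z < x + 1" "circ x = P1" "circ y = P2" "circ z = P3"
    using circ_parametrization[OF assms(1-4)] by blast
  have "y \<le> F x" "z \<le> F y" "x + 1 \<le> F z"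
    unfolding F_def using xyz assms(5) by (auto intro!: psi_lift_triangle_ge)
  then have "x + 1 \<le> F (F (F x))"
    using mono_psi_lift_triangle unfolding F_def [symmetric] by (meson monoD order_trans)
  then show ?thesis by (auto simp: F_def numeral_3_eq_3)
qed

lemma psi_lift_triangle_cube_le_if_inscribed:
  assumes "norm P1 = 1" "norm P2 = 1" "norm P3 = 1" "cross2 (P2 - P1) (P3 - P1) > 0"
    and "\<exists>X\<in>{A,B,C}. cross2 (P2 - P1) (X - P1) \<le> 0" "\<exists>X\<in>{A,B,C}. cross2 (P3 - P2) (X - P2) \<le> 0"
      "\<exists>X\<in>{A,B,C}. cross2 (P1 - P3) (X - P3) \<le> 0"
  shows "\<exists>x. (psi_lift (convex hull {A,B,C}) ^^ 3) x \<le> x + 1"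
proof -
  define F where "F = psi_lift (convex hull {A,B,C})"
  obtain x y z where xyz: "x < y" "y < z" "z < x + 1" "circ x = P1" "circ y = P2" "circ z = P3"
    using circ_parametrization[OF assms(1-4)] by blast
  have "F x \<le> y" "F y \<le> z" "F z \<le> x + 1"
    unfolding F_def using xyz assms(5-7) by (auto intro!: psi_lift_triangle_le)
  then have "F (F (F x)) \<le> x + 1"
    using mono_psi_lift_triangle unfolding F_def [symmetric] by (meson monoD order_trans)
  then show ?thesis by (auto simp: F_def numeral_3_eq_3)
qed

end

lemma psi_lift_triangle_cube_ge:
  assumes interior: "norm A < 1" "norm B < 1" "norm C < 1" and "\<not> collinear {A, B, C}"
  shows "\<exists>x. x + 1 \<le> (psi_lift (convex hull {A,B,C}) ^^ 3) x"
proof -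
  have positive: "\<exists>x. x + 1 \<le> (psi_lift (convex hull {A,B,C}) ^^ 3) x"
    if interior: "norm A < 1" "norm B < 1" "norm C < 1" and "0 < cross2 (B - A) (C - A)" for A B C :: "real^2"
  proof -
    define G where "G = (1/3) *\<^sub>R (A + B + C)"
    define c where "c = cross2 (B - A) (C - A) / 3"
    have "0 < c" using that by (simp add: c_def)
    have c: "cross2 (A - G) (B - G) = c" "cross2 (B - G) (C - G) = c" "cross2 (C - G) (A - G) = c"
      by (simp_all add: c_def G_def cross2_def algebra_simps)
    then have "A \<noteq> G" "B \<noteq> G" "C \<noteq> G" using \<open>0 < c\<close> by (auto simp: cross2_def)
    then obtain a b d where a: "1 \<le> a" "norm (G + a *\<^sub>R (A - G)) = 1"
      and b: "1 \<le> b" "norm (G + b *\<^sub>R (B - G)) = 1" and d: "1 \<le> d" "norm (G + d *\<^sub>R (C - G)) = 1"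
      using ray_meets_circle[OF interior(1) \<open>A \<noteq> G\<close>] ray_meets_circle[OF interior(2) \<open>B \<noteq> G\<close>]
        ray_meets_circle[OF interior(3) \<open>C \<noteq> G\<close>] by metis
    define P1 where "P1 = G + a *\<^sub>R (A - G)"
    define P2 where "P2 = G + b *\<^sub>R (B - G)"
    define P3 where "P3 = G + d *\<^sub>R (C - G)"
    have "cross2 (P2 - P1) (P3 - P1) = (b * d + a * b + a * d) * c"
      unfolding P1_def P2_def P3_def cross2_ray_points c by (simp add: algebra_simps)
    also have "\<dots> > 0" using a(1) b(1) d(1) \<open>0 < c\<close> by (intro mult_pos_pos add_pos_pos) auto
    finally have "0 < cross2 (P2 - P1) (P3 - P1)" .
    moreover have "\<forall>X\<in>{A,B,C}. 0 \<le> cross2 (P2 - P1) (X - P1) \<and> 0 \<le> cross2 (P3 - P2) (X - P2) \<and>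
        0 \<le> cross2 (P1 - P3) (X - P3)"
      using cross2_ray_chord_nonneg[of a b c "A - G" "B - G" "C - G" G]
        cross2_ray_chord_nonneg[of b d c "B - G" "C - G" "A - G" G]
        cross2_ray_chord_nonneg[of d a c "C - G" "A - G" "B - G" G]
      a(1) b(1) d(1) c \<open>0 < c\<close> unfolding P1_def [symmetric] P2_def [symmetric] P3_def [symmetric]
      by simp
    ultimately show ?thesis
      using psi_lift_triangle_cube_ge_if_inscribed[OF interior] a b d
      unfolding P1_def P2_def P3_def by blast
  qed
  have "cross2 (B - A) (C - A) \<noteq> 0" using assms(4) by (simp add: collinear_iff_cross2)
  then consider "0 < cross2 (B - A) (C - A)" | "0 < cross2 (C - A) (B - A)"
    by (metis cross2_commute neg_0_less_iff_less linorder_neqE_linordered_idom)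
  then show ?thesis
    by cases (use positive[of A B C] positive[of A C B] interior in \<open>auto simp: insert_commute\<close>)
qed

lemma psi_lift_triangle_cube_le_if_cut:
  assumes interior: "norm A < 1" "norm B < 1" "norm C < 1" and \<sigma>: "\<sigma> = 1 \<or> \<sigma> = -1"
    and P: "norm P1 = 1" "norm P2 = 1" "norm P3 = 1" "\<sigma> * cross2 (P2 - P1) (P3 - P1) > 0"
    and cut: "\<exists>X\<in>{A,B,C}. \<sigma> * cross2 (P2 - P1) (X - P1) \<le> 0" "\<exists>X\<in>{A,B,C}. \<sigma> * cross2 (P3 - P2) (X - P2) \<le> 0"
      "\<exists>X\<in>{A,B,C}. \<sigma> * cross2 (P1 - P3) (X - P3) \<le> 0"
  shows "\<exists>x. (psi_lift (convex hull {A,B,C}) ^^ 3) x \<le> x + 1"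
  using \<sigma>
proof
  assume "\<sigma> = 1"
  then show ?thesis using psi_lift_triangle_cube_le_if_inscribed[OF interior P(1-3)] P(4) cut by simp
next
  assume "\<sigma> = -1"
  then have "cross2 (P3 - P1) (P2 - P1) > 0" using P(4) cross2_commute[of "P2 - P1"] by simp
  moreover have "\<exists>X\<in>{A,B,C}. cross2 (P3 - P1) (X - P1) \<le> 0" "\<exists>X\<in>{A,B,C}. cross2 (P2 - P3) (X - P3) \<le> 0"
    "\<exists>X\<in>{A,B,C}. cross2 (P1 - P2) (X - P2) \<le> 0"
    using cut \<open>\<sigma> = -1\<close> cross2_reverse_chord[of P3 P1] cross2_reverse_chord[of P2 P3]
      cross2_reverse_chord[of P1 P2] by auto
  ultimately show ?thesis using psi_lift_triangle_cube_le_if_inscribed[OF interior P(1) P(3) P(2)] by blast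
qed

definition has_rotation_number :: "(real^2) set \<Rightarrow> real \<Rightarrow> bool" where
  "has_rotation_number S r \<longleftrightarrow> (\<lambda>n. (psi_lift S ^^ n) 0 / real n) \<longlonglongrightarrow> r"

lemma has_rotation_number_triangle_third:
  assumes "norm A < 1" "norm B < 1" "norm C < 1" "\<not> collinear {A, B, C}"
    and "\<exists>x. (psi_lift (convex hull {A,B,C}) ^^ 3) x \<le> x + 1"
  shows "has_rotation_number (convex hull {A,B,C}) (1/3)"
proof -
  obtain x0 where "x0 + 1 \<le> (psi_lift (convex hull {A,B,C}) ^^ 3) x0"
    using psi_lift_triangle_cube_ge[OF assms(1-4)] by blast
  moreover obtain y0 where "(psi_lift (convex hull {A,B,C}) ^^ 3) y0 \<le> y0 + 1" using assms(5) by blast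
  ultimately show ?thesis
    using funpow_degree_one_dist_linear[where p = 3 and q = 1, OF mono_psi_lift_triangle[OF assms(1-3)]
        psi_lift_triangle_add_1[OF assms(1-3)] psi_lift_triangle_bounds[OF assms(1-3)]]
    unfolding has_rotation_number_def by (intro LIMSEQ_divide_of_bounded_dist) simp
qed

section \<open>Stability under congruence\<close>

lemma has_rotation_number_third_of_isometric_copy:
  fixes x1 x2 x3 g1 g2 g3 b :: "real^2" and U :: "real^2 \<Rightarrow> real^2"
  assumes x: "norm x1 \<le> 1" "norm x2 \<le> 1" "norm x3 \<le> 1" "\<not> collinear {x1, x2, x3}"
    and m: "0 \<le> m1" "0 \<le> m2" "0 \<le> m3" "m1 + m2 + m3 = 1" "m1 *\<^sub>R x1 + m2 *\<^sub>R x2 + m3 *\<^sub>R x3 = 0"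
      "0 < m1 \<Longrightarrow> norm x1 = 1" "0 < m2 \<Longrightarrow> norm x2 = 1" "0 < m3 \<Longrightarrow> norm x3 = 1"
    and g: "norm g1 = 1" "norm g2 = 1" "norm g3 = 1" "0 < cross2 (g2 - g1) (g3 - g1)"
    and cut: "\<exists>w\<in>{x1, x2, x3}. cross2 (g2 - g1) (w - g1) \<le> - \<kappa>"
      "\<exists>w\<in>{x1, x2, x3}. cross2 (g3 - g2) (w - g2) \<le> - \<kappa>"
      "\<exists>w\<in>{x1, x2, x3}. cross2 (g1 - g3) (w - g3) \<le> - \<kappa>"
    and l: "0 < l" "l \<le> 1" "1 - l \<le> \<kappa> / 4" "sqrt (1 - l^2) \<le> \<kappa> / 4"
    and U: "linear U" "\<And>y. norm (U y) = norm y"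
    and disk: "\<forall>x\<in>{x1, x2, x3}. norm (b + l *\<^sub>R U x) < 1"
  shows "has_rotation_number (convex hull {b + l *\<^sub>R U x1, b + l *\<^sub>R U x2, b + l *\<^sub>R U x3}) (1/3)"
proof -
  define V where "V x = b + l *\<^sub>R U x" for x
  obtain \<epsilon> where \<epsilon>: "\<epsilon> = 1 \<or> \<epsilon> = -1" and cross_U: "\<And>u v. cross2 (U u) (U v) = \<epsilon> * cross2 u v"
    using linear_isometry_cross2[OF U] by blast
  have \<epsilon>\<epsilon>: "\<epsilon> * \<epsilon> = 1" using \<epsilon> by auto
  have cross_U_diff: "cross2 (U p - U q) (U r - U q) = \<epsilon> * cross2 (p - q) (r - q)" for p q r
    by (simp add: cross_U flip: linear_diff[OF U(1)])
  have interior: "norm (V x1) < 1" "norm (V x2) < 1" "norm (V x3) < 1" using disk by (simp_all add: V_def)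
  have "m1 *\<^sub>R U x1 + m2 *\<^sub>R U x2 + m3 *\<^sub>R U x3 = 0"
    using m(5) linear_0[OF U(1)] by (simp flip: linear_add[OF U(1)] linear_scale[OF U(1)])
  then have "(norm b)\<^sup>2 < 1 - l\<^sup>2"
    using m(1-4,6-8) disk l(1) by (intro translation_bound) (simp_all add: U(2))
  then have "norm b < \<kappa> / 4" using l(4) real_less_rsqrt by fastforce
  then have small: "2 * norm b + 2 * (1 - l) < \<kappa>" using l(3) by (simp add: field_simps)
  have "cross2 (V x2 - V x1) (V x3 - V x1) = l\<^sup>2 * cross2 (U x2 - U x1) (U x3 - U x1)"
    by (simp add: V_def cross2_def power2_eq_square algebra_simps)
  then have "cross2 (V x2 - V x1) (V x3 - V x1) = l\<^sup>2 * (\<epsilon> * cross2 (x2 - x1) (x3 - x1))"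
    by (simp add: cross_U_diff)
  then have noncollinear: "\<not> collinear {V x1, V x2, V x3}"
    using x(4) \<epsilon> l(1) by (auto simp: collinear_iff_cross2)
  have moved_cut: "\<exists>X\<in>{V x1, V x2, V x3}. \<epsilon> * cross2 (U h' - U h) (X - U h) \<le> 0"
    if "norm h = 1" "norm h' = 1" "\<exists>w\<in>{x1, x2, x3}. cross2 (h' - h) (w - h) \<le> - \<kappa>" for h h'
  proof -
    from that(3) obtain w where w: "w \<in> {x1, x2, x3}" "cross2 (h' - h) (w - h) \<le> - \<kappa>" by blast
    have "\<epsilon> * cross2 (U h' - U h) (U w - U h) \<le> - \<kappa>"
      using w(2) by (simp add: cross_U_diff mult.assoc [symmetric] \<epsilon>\<epsilon>)
    then have "\<epsilon> * cross2 (U h' - U h) (V w - U h) < 0"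
      unfolding V_def using \<epsilon> that(1,2) w(1) x(1-3) l(1,2) small
      by (intro cross2_cut_stable) (auto simp: U(2))
    then show ?thesis using w(1) by auto
  qed
  have "0 < \<epsilon> * cross2 (U g2 - U g1) (U g3 - U g1)"
    using g(4) by (simp add: cross_U_diff mult.assoc [symmetric] \<epsilon>\<epsilon>)
  then have "\<exists>x. (psi_lift (convex hull {V x1, V x2, V x3}) ^^ 3) x \<le> x + 1"
    using g(1-3) moved_cut[OF g(1,2) cut(1)] moved_cut[OF g(2,3) cut(2)] moved_cut[OF g(3,1) cut(3)]
    by (intro psi_lift_triangle_cube_le_if_cut[OF interior \<epsilon>, of "U g1" "U g2" "U g3"])
      (simp_all add: U(2))
  then show ?thesis
    using has_rotation_number_triangle_third[OF interior noncollinear] by (simp add: V_def)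
qed

definition congruent_rotation_third :: "(real^2) set \<Rightarrow> bool" where
  "congruent_rotation_third T \<longleftrightarrow>
     (\<forall>S. is_triangle S \<and> in_disk S \<and> congruent T S \<longrightarrow> has_rotation_number S (1/3))"

lemma exists_scaling_congruent_rotation_third:
  fixes x1 x2 x3 g1 g2 g3 :: "real^2"
  assumes x: "norm x1 \<le> 1" "norm x2 \<le> 1" "norm x3 \<le> 1" "\<not> collinear {x1, x2, x3}"
    and m: "0 \<le> m1" "0 \<le> m2" "0 \<le> m3" "m1 + m2 + m3 = 1" "m1 *\<^sub>R x1 + m2 *\<^sub>R x2 + m3 *\<^sub>R x3 = 0"
      "0 < m1 \<Longrightarrow> norm x1 = 1" "0 < m2 \<Longrightarrow> norm x2 = 1" "0 < m3 \<Longrightarrow> norm x3 = 1"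
    and g: "norm g1 = 1" "norm g2 = 1" "norm g3 = 1" "0 < cross2 (g2 - g1) (g3 - g1)"
    and cut: "\<exists>w\<in>{x1, x2, x3}. cross2 (g2 - g1) (w - g1) < 0"
      "\<exists>w\<in>{x1, x2, x3}. cross2 (g3 - g2) (w - g2) < 0"
      "\<exists>w\<in>{x1, x2, x3}. cross2 (g1 - g3) (w - g3) < 0"
  obtains l where "0 < l" "l < 1" "congruent_rotation_third (convex hull {l *\<^sub>R x1, l *\<^sub>R x2, l *\<^sub>R x3})"
proof -
  obtain w1 w2 w3 where w: "w1 \<in> {x1, x2, x3}" "w2 \<in> {x1, x2, x3}" "w3 \<in> {x1, x2, x3}"
    "cross2 (g2 - g1) (w1 - g1) < 0" "cross2 (g3 - g2) (w2 - g2) < 0" "cross2 (g1 - g3) (w3 - g3) < 0"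
    using cut by blast
  define \<kappa> where "\<kappa> = min (- cross2 (g2 - g1) (w1 - g1)) (min (- cross2 (g3 - g2) (w2 - g2)) (- cross2 (g1 - g3) (w3 - g3)))"
  have "0 < \<kappa>" using w(4-6) by (simp add: \<kappa>_def)
  have margin: "\<exists>w\<in>{x1, x2, x3}. cross2 (g2 - g1) (w - g1) \<le> - \<kappa>"
    "\<exists>w\<in>{x1, x2, x3}. cross2 (g3 - g2) (w - g2) \<le> - \<kappa>"
    "\<exists>w\<in>{x1, x2, x3}. cross2 (g1 - g3) (w - g3) \<le> - \<kappa>"
    using w(1-3) unfolding \<kappa>_def by (fastforce simp: min_le_iff_disj)+
  define t where "t = min (\<kappa> / 4) (min (\<kappa>\<^sup>2 / 32) (1 / 2))"
  have t: "0 < t" "t \<le> \<kappa> / 4" "t \<le> \<kappa>\<^sup>2 / 32" "t \<le> 1 / 2" using \<open>0 < \<kappa>\<close> by (simp_all add: t_def)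
  define l where "l = 1 - t"
  have l: "0 < l" "l < 1" "1 - l \<le> \<kappa> / 4" using t by (simp_all add: l_def)
  have "1 - l\<^sup>2 \<le> (\<kappa> / 4)\<^sup>2"
  proof -
    have "1 - l\<^sup>2 = 2 * t - t\<^sup>2" by (simp add: l_def power2_eq_square algebra_simps)
    moreover have "(\<kappa> / 4)\<^sup>2 = \<kappa>\<^sup>2 / 16" by (simp add: power_divide)
    ultimately show ?thesis using t zero_le_power2[of t] by linarith
  qed
  then have sqrt: "sqrt (1 - l^2) \<le> \<kappa> / 4" using real_sqrt_le_mono \<open>0 < \<kappa>\<close> by fastforce
  have "has_rotation_number S (1/3)"
    if disk: "in_disk S" and cong: "congruent (convex hull {l *\<^sub>R x1, l *\<^sub>R x2, l *\<^sub>R x3}) S" for S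
  proof -
    obtain b U where U: "linear U" "\<And>y. norm (U y) = norm y"
      and S: "S = convex hull {b + U (l *\<^sub>R x1), b + U (l *\<^sub>R x2), b + U (l *\<^sub>R x3)}"
      using congruent_triangle_image[OF cong] by blast
    then have S: "S = convex hull {b + l *\<^sub>R U x1, b + l *\<^sub>R U x2, b + l *\<^sub>R U x3}"
      by (simp add: linear_scale)
    then have "\<forall>x\<in>{x1, x2, x3}. norm (b + l *\<^sub>R U x) < 1"
      using disk by (auto simp: in_disk_def dest: subsetD[OF _ hull_inc])
    then show ?thesis unfolding S
      using has_rotation_number_third_of_isometric_copy[OF x m g margin] l sqrt U by simp
  qed
  then show ?thesis using that l unfolding congruent_rotation_third_def by blast
qed

lemma exists_scaling_congruent_rotation_third_inscribed:
  assumes x: "norm x1 = 1" "norm x2 = 1" "norm x3 = 1" "0 < cross2 (x2 - x1) (x3 - x1)"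
    and m: "0 \<le> m1" "0 \<le> m2" "0 \<le> m3" "m1 + m2 + m3 = 1" "m1 *\<^sub>R x1 + m2 *\<^sub>R x2 + m3 *\<^sub>R x3 = 0"
  obtains l where "0 < l" "l < 1" "congruent_rotation_third (convex hull {l *\<^sub>R x1, l *\<^sub>R x2, l *\<^sub>R x3})"
proof -
  obtain a b c where abc: "a < b" "b < c" "c < a + 1" "circ a = x1" "circ b = x2" "circ c = x3"
    using circ_parametrization[OF x] by blast
  define \<theta> where "\<theta> = min (b - a) (min (c - b) (a + 1 - c)) / 2"
  have \<theta>: "0 < \<theta>" "\<theta> < b - a" "\<theta> < c - b" "\<theta> < a + 1 - c" using abc(1-3) by (auto simp: \<theta>_def)
  have cut: "cross2 (circ r - circ p) (circ q - circ p) < 0" if "p < q" "q < r" "r < p + 1" for p q r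
    using cross2_circ_pos[OF that] cross2_commute[of "circ r - circ p"] by simp
  have "circ (a + \<theta>) = circ ((a + 1) + \<theta>)" using circ_add_1[of "a + \<theta>"] by (simp add: ac_simps)
  moreover have "x1 = circ (a + 1)" using abc(4) by simp
  ultimately have cut3: "\<exists>w\<in>{x1, x2, x3}. cross2 (circ (a + \<theta>) - circ (c + \<theta>)) (w - circ (c + \<theta>)) < 0"
    using cut[of "c + \<theta>" "a + 1" "a + 1 + \<theta>"] \<theta> by auto
  have cut1: "\<exists>w\<in>{x1, x2, x3}. cross2 (circ (b + \<theta>) - circ (a + \<theta>)) (w - circ (a + \<theta>)) < 0"
    using cut[of "a + \<theta>" b "b + \<theta>"] \<theta> abc by auto
  have cut2: "\<exists>w\<in>{x1, x2, x3}. cross2 (circ (c + \<theta>) - circ (b + \<theta>)) (w - circ (b + \<theta>)) < 0"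
    using cut[of "b + \<theta>" c "c + \<theta>"] \<theta> abc by auto
  have "0 < cross2 (circ (b + \<theta>) - circ (a + \<theta>)) (circ (c + \<theta>) - circ (a + \<theta>))"
    using \<theta> abc by (intro cross2_circ_pos) auto
  moreover have "\<not> collinear {x1, x2, x3}" using x(4) by (simp add: collinear_iff_cross2)
  ultimately show ?thesis
    using exists_scaling_congruent_rotation_third[OF _ _ _ _ m _ _ _ _ _ _ _ cut1 cut2 cut3] x that by (simp, blast)
qed

section \<open>Normal forms of a triangle\<close>

lemma diameter_triangle_rotation_third:
  fixes s h :: real
  assumes h: "0 < h" and sh: "s\<^sup>2 + h\<^sup>2 \<le> 1"
  defines "x1 \<equiv> vector [1, 0] :: real^2" and "x2 \<equiv> vector [-1, 0] :: real^2"
    and "x3 \<equiv> vector [s, h] :: real^2"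
  shows "\<forall>x\<in>{x1, x2, x3}. norm x \<le> 1" "\<not> collinear {x1, x2, x3}"
    "\<exists>l. 0 < l \<and> l < 1 \<and> congruent_rotation_third (convex hull {l *\<^sub>R x1, l *\<^sub>R x2, l *\<^sub>R x3})"
proof -
  have "h\<^sup>2 \<le> 1" using sh zero_le_power2[of s] by linarith
  then have "h \<le> 1" using h by (simp add: power_le_one_iff)
  define c where "c = sqrt (1 - h\<^sup>2 / 4)"
  have c: "0 < c" "c \<le> 1" "c\<^sup>2 = 1 - h\<^sup>2 / 4" using \<open>h\<^sup>2 \<le> 1\<close> h by (simp_all add: c_def)
  \<comment> \<open>an inscribed triangle with a horizontal side just below the apex x3\<close>
  define g1 :: "real^2" where "g1 = vector [c, h/2]"
  define g2 :: "real^2" where "g2 = vector [-c, h/2]"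
  define g3 :: "real^2" where "g3 = vector [0, -1]"
  show "\<forall>x\<in>{x1, x2, x3}. norm x \<le> 1" using sh by (simp add: x1_def x2_def x3_def norm_vector2)
  moreover show "\<not> collinear {x1, x2, x3}"
    using h by (simp add: collinear_iff_cross2 x1_def x2_def x3_def cross2_def)
  moreover have "(1/2) *\<^sub>R x1 + (1/2) *\<^sub>R x2 + 0 *\<^sub>R x3 = 0" by (simp add: x1_def x2_def real2_eq_iff)
  moreover have "norm x1 = 1" "norm x2 = 1" by (simp_all add: x1_def x2_def norm_vector2)
  moreover have "norm g1 = 1" "norm g2 = 1" "norm g3 = 1"
    by (simp_all add: g1_def g2_def g3_def norm_vector2 c(3) power_divide)
  moreover have "0 < cross2 (g2 - g1) (g3 - g1)"
    using c mult_pos_pos[OF c(1) h] by (simp add: g1_def g2_def g3_def cross2_def algebra_simps)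
  moreover have "cross2 (g2 - g1) (x3 - g1) < 0"
    using c h by (simp add: g1_def g2_def x3_def cross2_def algebra_simps)
  moreover have "cross2 (g3 - g2) (x2 - g2) = c - 1 - h/2" "cross2 (g1 - g3) (x1 - g3) = c - 1 - h/2"
    by (simp_all add: g1_def g2_def g3_def x1_def x2_def cross2_def field_simps)
  ultimately show "\<exists>l. 0 < l \<and> l < 1 \<and> congruent_rotation_third (convex hull {l *\<^sub>R x1, l *\<^sub>R x2, l *\<^sub>R x3})"
    using exists_scaling_congruent_rotation_third[of x1 x2 x3 "1/2" "1/2" 0 g1 g2 g3] c(2) h by auto
qed

lemma circumcircle_triangle_rotation_third:
  fixes s h :: real
  assumes h: "0 < h" and s: "\<bar>s\<bar> < 1" and sh: "1 < s\<^sup>2 + h\<^sup>2"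
  defines "k \<equiv> (s\<^sup>2 + h\<^sup>2 - 1) / (2 * h)"
  defines "\<rho> \<equiv> sqrt (1 + k\<^sup>2)"
  defines "x1 \<equiv> vector [1 / \<rho>, - k / \<rho>] :: real^2" and "x2 \<equiv> vector [-1 / \<rho>, - k / \<rho>] :: real^2"
    and "x3 \<equiv> vector [s / \<rho>, (h - k) / \<rho>] :: real^2"
  shows "\<forall>x\<in>{x1, x2, x3}. norm x \<le> 1" "\<not> collinear {x1, x2, x3}"
    "\<exists>l. 0 < l \<and> l < 1 \<and> congruent_rotation_third (convex hull {l *\<^sub>R x1, l *\<^sub>R x2, l *\<^sub>R x3})"
proof -
  have k: "0 < k" "2 * h * k = s\<^sup>2 + h\<^sup>2 - 1" using h sh by (simp_all add: k_def)
  have "0 < 1 + k\<^sup>2" by (simp add: add_pos_nonneg)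
  then have \<rho>: "0 < \<rho>" "\<rho>\<^sup>2 = 1 + k\<^sup>2" by (simp_all add: \<rho>_def)
  have unit: "norm (vector [a / \<rho>, b / \<rho>] :: real^2) = 1" if "a\<^sup>2 + b\<^sup>2 = 1 + k\<^sup>2" for a b
    using that \<rho> \<open>0 < 1 + k\<^sup>2\<close> by (simp add: norm_vector2 power_divide add_divide_distrib [symmetric])
  have "s\<^sup>2 + (h - k)\<^sup>2 = 1 + k\<^sup>2" using k(2) by (simp add: power2_eq_square algebra_simps)
  then have norms: "norm x1 = 1" "norm x2 = 1" "norm x3 = 1"
    unfolding x1_def x2_def x3_def using unit[of 1 "- k"] unit[of "- 1" "- k"] unit[of s "h - k"] by simp_all
  then show "\<forall>x\<in>{x1, x2, x3}. norm x \<le> 1" by simp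
  have "cross2 (x3 - x1) (x2 - x1) = 2 * h / \<rho>\<^sup>2"
    using \<rho> by (simp add: x1_def x2_def x3_def cross2_def field_simps power2_eq_square)
  then have orientation: "0 < cross2 (x3 - x1) (x2 - x1)" using h \<rho>(1) by simp
  then show "\<not> collinear {x1, x2, x3}"
    by (simp add: collinear_iff_cross2 cross2_def algebra_simps)
  \<comment> \<open>barycentric coordinates of the circumcentre 0, nonnegative as the triangle is not obtuse\<close>
  define m3 where "m3 = k / h"
  define m1 where "m1 = (1 - m3 * (1 + s)) / 2"
  define m2 where "m2 = (1 - m3 * (1 - s)) / 2"
  have "k * (1 + s) \<le> h" "k * (1 - s) \<le> h"
  proof -
    have "(s\<^sup>2 + h\<^sup>2 - 1) * (1 + s) - 2 * h\<^sup>2 = (s - 1) * ((1 + s)\<^sup>2 + h\<^sup>2)"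
      "(s\<^sup>2 + h\<^sup>2 - 1) * (1 - s) - 2 * h\<^sup>2 = (- 1 - s) * ((1 - s)\<^sup>2 + h\<^sup>2)"
      by (simp_all add: power2_eq_square algebra_simps)
    moreover have "(s - 1) * ((1 + s)\<^sup>2 + h\<^sup>2) \<le> 0" "(- 1 - s) * ((1 - s)\<^sup>2 + h\<^sup>2) \<le> 0"
      using s by (simp_all add: mult_nonpos_nonneg)
    ultimately have "(2 * h * k) * (1 + s) \<le> 2 * h * h" "(2 * h * k) * (1 - s) \<le> 2 * h * h"
      unfolding k(2) by (simp_all add: power2_eq_square)
    then show "k * (1 + s) \<le> h" "k * (1 - s) \<le> h" using h by (simp_all add: mult.assoc)
  qed
  then have "0 \<le> m1" "0 \<le> m2" "0 \<le> m3" using h k(1) by (simp_all add: m1_def m2_def m3_def field_simps)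
  moreover have "m1 + m3 + m2 = 1" by (simp add: m1_def m2_def field_simps)
  moreover have "m1 *\<^sub>R x1 + m3 *\<^sub>R x3 + m2 *\<^sub>R x2 = 0"
    using h \<rho>(1) by (simp add: x1_def x2_def x3_def m1_def m2_def m3_def real2_eq_iff field_simps)
  ultimately obtain l where "0 < l" "l < 1"
    "congruent_rotation_third (convex hull {l *\<^sub>R x1, l *\<^sub>R x3, l *\<^sub>R x2})"
    using exists_scaling_congruent_rotation_third_inscribed[OF norms(1,3,2) orientation] by blast
  then show "\<exists>l. 0 < l \<and> l < 1 \<and> congruent_rotation_third (convex hull {l *\<^sub>R x1, l *\<^sub>R x2, l *\<^sub>R x3})"
    by (metis insert_commute)
qed

lemma similar_congruent_rotation_third_of_normal_form:
  assumes \<Psi>: "\<And>y y'. dist (\<Psi> y) (\<Psi> y') = K * dist y y'" "0 < K"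
      "\<Psi> ` (convex hull {A, B, C}) = convex hull {x1, x2, x3}"
    and x: "\<forall>x\<in>{x1, x2, x3}. norm x \<le> 1" "\<not> collinear {x1, x2, x3}"
    and "\<exists>l. 0 < l \<and> l < 1 \<and> congruent_rotation_third (convex hull {l *\<^sub>R x1, l *\<^sub>R x2, l *\<^sub>R x3})"
  shows "\<exists>T'. is_triangle T' \<and> in_disk T' \<and> similar (convex hull {A, B, C}) T' \<and> congruent_rotation_third T'"
proof -
  obtain l where l: "0 < l" "l < 1" "congruent_rotation_third (convex hull {l *\<^sub>R x1, l *\<^sub>R x2, l *\<^sub>R x3})"
    using assms(6) by blast
  show ?thesis
  proof (intro exI conjI)
    have "cross2 (l *\<^sub>R x2 - l *\<^sub>R x1) (l *\<^sub>R x3 - l *\<^sub>R x1) = l\<^sup>2 * cross2 (x2 - x1) (x3 - x1)"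
      by (simp add: cross2_def power2_eq_square algebra_simps)
    then show "is_triangle (convex hull {l *\<^sub>R x1, l *\<^sub>R x2, l *\<^sub>R x3})"
      using x(2) l(1) unfolding is_triangle_def collinear_iff_cross2
      by (intro exI[of _ "l *\<^sub>R x1"] exI[of _ "l *\<^sub>R x2"] exI[of _ "l *\<^sub>R x3"]) simp
    show "in_disk (convex hull {l *\<^sub>R x1, l *\<^sub>R x2, l *\<^sub>R x3})"
      using x(1) l(1,2) unfolding in_disk_def
      by (intro hull_minimal) (auto intro: le_less_trans[OF mult_left_le] simp: convex_ball)
    have "(\<lambda>y. l *\<^sub>R \<Psi> y) ` (convex hull {A, B, C}) = convex hull {l *\<^sub>R x1, l *\<^sub>R x2, l *\<^sub>R x3}"
      using \<Psi>(3) by (simp add: image_comp [symmetric, unfolded o_def] flip: convex_hull_scaling)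
    then show "similar (convex hull {A, B, C}) (convex hull {l *\<^sub>R x1, l *\<^sub>R x2, l *\<^sub>R x3})"
      unfolding similar_def using \<Psi>(1,2) l(1)
      by (intro exI[of _ "\<lambda>y. l *\<^sub>R \<Psi> y"] exI[of _ "l * K"]) (simp add: dist_norm flip: scaleR_diff_right)
  qed (use l in simp)
qed

lemma triangle_similarity_normal_form:
  assumes ncol: "\<not> collinear {A, B, C}" and longest: "dist A C \<le> dist A B" "dist B C \<le> dist A B"
  obtains K and \<Phi> :: "real^2 \<Rightarrow> real^2" and s h where "0 < K" "\<And>y y'. dist (\<Phi> y) (\<Phi> y') = K * dist y y'"
    "\<And>a b c. \<Phi> ` (convex hull {a, b, c}) = convex hull {\<Phi> a, \<Phi> b, \<Phi> c}"
    "\<Phi> A = vector [1, 0]" "\<Phi> B = vector [-1, 0]" "\<Phi> C = vector [s, h]" "0 < h" "\<bar>s\<bar> < 1"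
proof -
  define M where "M = (1/2) *\<^sub>R (A + B)"
  define w where "w = (1/2) *\<^sub>R (A - B)"
  have "cross2 w (C - M) = - (1/2) * cross2 (B - A) (C - A)"
    by (simp add: w_def M_def cross2_def algebra_simps)
  then have "cross2 w (C - M) \<noteq> 0" using ncol by (simp add: collinear_iff_cross2)
  have "A \<noteq> B" using ncol by auto
  then have "0 < norm w" by (simp add: w_def)
  define \<sigma> :: real where "\<sigma> = (if cross2 w (C - M) > 0 then 1 else -1)"
  have \<sigma>: "\<sigma> = 1 \<or> \<sigma> = -1" by (simp add: \<sigma>_def)
  define q where "q = 1 / (norm w)\<^sup>2"
  have "0 < q" using \<open>0 < norm w\<close> by (simp add: q_def)
  define s where "s = q * inner w (C - M)"
  define h where "h = \<sigma> * q * cross2 w (C - M)"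
  have "0 < h"
    using \<open>0 < q\<close> \<open>cross2 w (C - M) \<noteq> 0\<close> by (auto simp: h_def \<sigma>_def zero_less_mult_iff mult_less_0_iff)
  define \<Phi> :: "real^2 \<Rightarrow> real^2"
    where "\<Phi> y = vector [q * inner w (y - M), \<sigma> * q * cross2 w (y - M)]" for y
  have "A - M = w" "B - M = - w" by (simp_all add: w_def M_def real2_eq_iff algebra_simps)
  then have \<Phi>: "\<Phi> A = vector [1, 0]" "\<Phi> B = vector [-1, 0]" "\<Phi> C = vector [s, h]"
    using \<open>0 < norm w\<close> by (simp_all add: \<Phi>_def q_def s_def h_def cross2_def dot_square_norm)
  have dist_\<Phi>: "dist (\<Phi> y) (\<Phi> y') = (q * norm w) * dist y y'" for y y'
    unfolding \<Phi>_def by (rule similarity_real2(1)[OF \<open>0 < q\<close> \<sigma>])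
  have "q * norm w * dist A B = 2"
    using \<open>0 < norm w\<close> by (simp add: q_def w_def dist_norm power2_eq_square)
  then have "dist (\<Phi> A) (\<Phi> C) \<le> 2" "dist (\<Phi> B) (\<Phi> C) \<le> 2"
    unfolding dist_\<Phi> using longest \<open>0 < q\<close> \<open>0 < norm w\<close> by (metis mult_left_mono zero_le_mult_iff
        less_eq_real_def norm_ge_zero)+
  then have "(dist (\<Phi> A) (\<Phi> C))\<^sup>2 \<le> 2\<^sup>2" "(dist (\<Phi> B) (\<Phi> C))\<^sup>2 \<le> 2\<^sup>2"
    by (simp_all only: power_mono zero_le_dist)
  then have "(1 - s)\<^sup>2 + h\<^sup>2 \<le> 2\<^sup>2" "(1 + s)\<^sup>2 + h\<^sup>2 \<le> 2\<^sup>2"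
    unfolding \<Phi> dist_norm norm_real2_power2 by (simp_all add: power2_commute add.commute)
  moreover have "0 < h\<^sup>2" using \<open>0 < h\<close> by simp
  ultimately have "(1 - s)\<^sup>2 < 2\<^sup>2" "(1 + s)\<^sup>2 < 2\<^sup>2" by linarith+
  then have "1 - s < 2" "1 + s < 2" by (meson power2_less_imp_less zero_le_numeral)+
  then have "\<bar>s\<bar> < 1" by linarith
  moreover have "\<Phi> ` (convex hull {a, b, c}) = convex hull {\<Phi> a, \<Phi> b, \<Phi> c}" for a b c
    unfolding \<Phi>_def by (rule similarity_real2(2)[OF \<open>0 < q\<close> \<sigma>])
  ultimately show ?thesis
    using that[OF _ dist_\<Phi>] \<Phi> \<open>0 < h\<close> \<open>0 < q\<close> \<open>0 < norm w\<close> by simp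
qed

lemma exists_similar_congruent_rotation_third_longest_side:
  assumes "\<not> collinear {A, B, C}" "dist A C \<le> dist A B" "dist B C \<le> dist A B"
  shows "\<exists>T'. is_triangle T' \<and> in_disk T' \<and> similar (convex hull {A, B, C}) T' \<and> congruent_rotation_third T'"
proof (rule triangle_similarity_normal_form[OF assms])
  fix K and \<Phi> :: "real^2 \<Rightarrow> real^2" and s h
  assume \<Phi>: "0 < K" "\<And>y y'. dist (\<Phi> y) (\<Phi> y') = K * dist y y'"
    "\<And>a b c. \<Phi> ` (convex hull {a, b, c}) = convex hull {\<Phi> a, \<Phi> b, \<Phi> c}"
    "\<Phi> A = vector [1, 0]" "\<Phi> B = vector [-1, 0]" "\<Phi> C = vector [s, h]" "0 < h" "\<bar>s\<bar> < 1"
  show ?thesis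
  proof (cases "s\<^sup>2 + h\<^sup>2 \<le> 1")
    case True
    then show ?thesis
      using diameter_triangle_rotation_third[OF \<open>0 < h\<close> True] \<Phi>
      by (intro similar_congruent_rotation_third_of_normal_form[OF \<Phi>(2,1)]) simp_all
  next
    case False
    define k where "k = (s\<^sup>2 + h\<^sup>2 - 1) / (2 * h)"
    define \<rho> where "\<rho> = sqrt (1 + k\<^sup>2)"
    have "0 < \<rho>" by (simp add: \<rho>_def add_pos_nonneg)
    \<comment> \<open>the circumcircle of (1, 0), (-1, 0), (s, h) has centre (0, k) and radius \<rho>\<close>
    define G :: "real^2 \<Rightarrow> real^2" where "G z = vector [0, - k / \<rho>] + (1 / \<rho>) *\<^sub>R z" for z
    have dist_G: "dist (G (\<Phi> y)) (G (\<Phi> y')) = (K / \<rho>) * dist y y'" for y y'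
      using \<Phi>(2) \<open>0 < \<rho>\<close> by (simp add: G_def dist_norm flip: scaleR_diff_right)
    have "(\<lambda>y. G (\<Phi> y)) ` (convex hull {A, B, C}) = G ` (convex hull {\<Phi> A, \<Phi> B, \<Phi> C})"
      using \<Phi>(3)[of A B C] by (simp add: image_image [symmetric])
    also have "\<dots> = convex hull {G (\<Phi> A), G (\<Phi> B), G (\<Phi> C)}"
      using convex_hull_affinity[of "vector [0, - k / \<rho>]" "1 / \<rho>" "{\<Phi> A, \<Phi> B, \<Phi> C}"]
      unfolding G_def [abs_def] by simp
    finally have hull_G: "(\<lambda>y. G (\<Phi> y)) ` (convex hull {A, B, C}) = convex hull {G (\<Phi> A), G (\<Phi> B), G (\<Phi> C)}" .
    have "G (\<Phi> A) = vector [1 / \<rho>, - k / \<rho>]" "G (\<Phi> B) = vector [-1 / \<rho>, - k / \<rho>]"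
      "G (\<Phi> C) = vector [s / \<rho>, (h - k) / \<rho>]"
      using \<Phi>(4-6) by (simp_all add: G_def real2_eq_iff diff_divide_distrib)
    then show ?thesis
      using circumcircle_triangle_rotation_third[OF \<open>0 < h\<close> \<open>\<bar>s\<bar> < 1\<close>, folded k_def \<rho>_def] False
        \<open>0 < K\<close> \<open>0 < \<rho>\<close> hull_G
      by (intro similar_congruent_rotation_third_of_normal_form[where \<Psi> = "\<lambda>y. G (\<Phi> y)", OF dist_G])
        simp_all
  qed
qed

theorem theorem5p1:
  assumes "is_triangle T" and "in_disk T"
  shows "\<exists>T'. is_triangle T' \<and> in_disk T' \<and> similar T T' \<and>
           (\<forall>S. is_triangle S \<and> in_disk S \<and> congruent T' S \<longrightarrow>
              (\<lambda>n. (psi_lift S ^^ n) 0 / real n) \<longlonglongrightarrow> 1 / 3)"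
proof -
  obtain A B C where "\<not> collinear {A, B, C}" and T: "T = convex hull {A, B, C}"
    using assms(1) unfolding is_triangle_def by blast
  moreover obtain A' B' C' where "{A', B', C'} = {A, B, C}" "dist A' C' \<le> dist A' B'" "dist B' C' \<le> dist A' B'"
    by (rule obtain_longest_side)
  ultimately have "\<exists>T'. is_triangle T' \<and> in_disk T' \<and> similar T T' \<and> congruent_rotation_third T'"
    using exists_similar_congruent_rotation_third_longest_side[of A' B' C'] by simp
  then show ?thesis unfolding congruent_rotation_third_def has_rotation_number_def .
qed

end
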